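(* $\mathrm{cov}^{*}(\mathcal{S}pl)=\mathfrak{r}$.
   Context: For an infinite $A\subseteq\omega$, let $S(A)$ be the set of all $\sigma\in2^{<\omega}$ such that $\sigma$ is constant on $A\cap\mathrm{dom}(\sigma)$. The splitting ideal $\mathcal{S}pl$ is the ideal on $2^{<\omega}$ generated by the sets $S(A)$, $A\in[\omega]^{\omega}$ (i.e. its elements are the subsets of finite unions of such sets). For a tall ideal $\mathcal{J}$ on a countable set $X$, $\mathrm{cov}^{*}(\mathcal{J})=\min\{|\mathcal{F}|:\mathcal{F}\subseteq\mathcal{J}$ and for every infinite $Y\subseteq X$ there is $F\in\mathcal{F}$ with $|F\cap Y|=\omega\}$. $\mathfrak{r}$ is the reaping number: the least size of a family $\mathcal{R}\subseteq[\omega]^\omega$ such that no single $B\in[\omega]^\omega$ splits every member of $\mathcal{R}$ (where $B$ splits $A$ if $A\cap B$ and $A\setminus B$ are both infinite). *)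

theory Defs
  imports Main
begin

text \<open>Elements of 2^{<omega} are finite binary sequences, modelled as bool lists;
  dom sigma = {0..<length sigma}.\<close>

definition S_set :: "nat set \<Rightarrow> bool list set" where
  "S_set A = {\<sigma>. \<forall>i\<in>A. \<forall>j\<in>A. i < length \<sigma> \<longrightarrow> j < length \<sigma> \<longrightarrow> \<sigma> ! i = \<sigma> ! j}"

definition Spl :: "bool list set set" where
  "Spl = {X. \<exists>\<A>. finite \<A> \<and> (\<forall>A\<in>\<A>. infinite A) \<and> X \<subseteq> (\<Union>A\<in>\<A>. S_set A)}"

definition cov_star_family :: "'a set set \<Rightarrow> 'a set set \<Rightarrow> bool" where
  "cov_star_family J F \<longleftrightarrow> F \<subseteq> J \<and> (\<forall>Y. infinite Y \<longrightarrow> (\<exists>X\<in>F. infinite (X \<inter> Y)))"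

definition splits :: "nat set \<Rightarrow> nat set \<Rightarrow> bool" where
  "splits B A \<longleftrightarrow> infinite (A \<inter> B) \<and> infinite (A - B)"

definition reaping_family :: "nat set set \<Rightarrow> bool" where
  "reaping_family R \<longleftrightarrow> (\<forall>A\<in>R. infinite A) \<and>
     \<not> (\<exists>B. infinite B \<and> (\<forall>A\<in>R. splits B A))"

end

(*
  Let R be a reaping family and Y an infinite set of finite binary
  sequences.  By Koenig's lemma Y contains sequences sigma_k converging to a branch x, with
  lengths in [m_k, m_(k+1)).  Some A in R is almost homogeneous for x, and, transporting R into
  A along the increasing enumeration of A, some A' in R has an image G in A that is almost
  homogeneous for the union E of the even intervals [m_k, m_(k+1)).  After deleting a finite
  set, every sigma_k whose index parity disagrees with E on G meets G only below m_k, where it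
  agrees with x and is hence constant.  So the |R| many sets S(G) witness cov*(Spl) <= r.

  The finitely many generators A of the members of a cov*-family F form a
  reaping family of size at most |F|: if B split all of them, the initial segments of the
  characteristic function of B would form an infinite set meeting every S(A) in a finite set.
*)
theory Submission
  imports Defs "HOL-Library.Infinite_Set"
begin

unbundle cardinal_syntax

lemma exists_card_minimal:
  assumes "P X"
  shows "\<exists>X0. P X0 \<and> (\<forall>X'. P X' \<longrightarrow> card_of X0 \<le>o card_of X')"
proof -
  obtain r where r: "r \<in> {card_of Z | Z. P Z}" and r_min: "\<forall>r'\<in>{card_of Z | Z. P Z}. r \<le>o r'"
    using exists_minim_Well_order[of "{card_of Z | Z. P Z}"] assms card_of_Well_order by blast
  then obtain X0 where "r = card_of X0" "P X0" by blast
  with r_min show ?thesis by blast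
qed

lemma not_splits_iff: "\<not> splits B A \<longleftrightarrow> (\<exists>v. finite {i\<in>A. (i \<in> B) \<noteq> v})"
proof -
  have "{i\<in>A. (i \<in> B) \<noteq> False} = A \<inter> B" "{i\<in>A. (i \<in> B) \<noteq> True} = A - B" by auto
  then show ?thesis unfolding splits_def ex_bool_eq by auto
qed

lemma not_splits_image:
  assumes "\<not> splits (e -` B) A"
  shows "\<not> splits B (e ` A)"
proof -
  have "e ` A \<inter> B = e ` (A \<inter> e -` B)" "e ` A - B = e ` (A - e -` B)" by auto
  with assms show ?thesis unfolding splits_def by auto
qed

lemma reaping_family_member_infinite: "reaping_family R \<Longrightarrow> A \<in> R \<Longrightarrow> infinite A"
  by (simp add: reaping_family_def)

lemma reaping_family_not_splits:
  assumes "reaping_family R"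
  shows "\<exists>A\<in>R. \<not> splits B A"
proof (cases "finite B")
  case True
  have "R \<noteq> {}" using assms unfolding reaping_family_def by auto
  with True show ?thesis unfolding splits_def by blast
next
  case False
  with assms show ?thesis unfolding reaping_family_def by blast
qed

lemma reaping_family_infinite_sets: "reaping_family {A :: nat set. infinite A}"
  unfolding reaping_family_def
proof (intro conjI notI)
  assume "\<exists>B. infinite B \<and> (\<forall>A\<in>{A. infinite A}. splits B A)"
  then obtain B where "splits B B" by blast
  then show False unfolding splits_def by simp
qed simp

definition even_blocks :: "(nat \<Rightarrow> nat) \<Rightarrow> nat set" where
  "even_blocks g = {i. \<exists>k. even k \<and> g k \<le> i \<and> i < g (Suc k)}"

lemma block_index_unique:
  assumes "mono g" "g j \<le> i" "i < g (Suc j)" "g k \<le> i" "i < g (Suc k)"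
  shows "j = k"
proof (rule ccontr)
  assume "j \<noteq> k"
  then consider "Suc j \<le> k" | "Suc k \<le> j" by linarith
  then show False
  proof cases
    case 1
    then have "g (Suc j) \<le> g k" using \<open>mono g\<close> by (rule monoD[rotated])
    with assms show False by (meson leD order_trans)
  next
    case 2
    then have "g (Suc k) \<le> g j" using \<open>mono g\<close> by (rule monoD[rotated])
    with assms show False by (meson leD order_trans)
  qed
qed

lemma mem_even_blocks_iff:
  "mono g \<Longrightarrow> g k \<le> i \<Longrightarrow> i < g (Suc k) \<Longrightarrow> i \<in> even_blocks g \<longleftrightarrow> even k"
  using block_index_unique unfolding even_blocks_def by blast

lemma splits_even_blocks:
  assumes g: "strict_mono g" and A: "\<And>k. \<exists>a\<in>A. g k \<le> a \<and> a < g (Suc k)"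
  shows "splits (even_blocks g) A"
proof -
  have far: "\<exists>a\<ge>k. a \<in> A \<and> (a \<in> even_blocks g \<longleftrightarrow> even k)" for k
  proof -
    obtain a where a: "a \<in> A" "g k \<le> a" "a < g (Suc k)" using A by blast
    have "k \<le> a" using strict_mono_imp_increasing[OF g, of k] a(2) by linarith
    moreover have "a \<in> even_blocks g \<longleftrightarrow> even k"
      using mem_even_blocks_iff[OF strict_mono_mono[OF g] a(2,3)] .
    ultimately show ?thesis using a(1) by blast
  qed
  have "\<exists>a\<ge>N. a \<in> A \<inter> even_blocks g" for N
  proof -
    obtain a where "2 * N \<le> a" "a \<in> A" "a \<in> even_blocks g" using far[of "2 * N"] by auto
    then show ?thesis by (intro exI[of _ a]) auto
  qed
  moreover have "\<exists>a\<ge>N. a \<in> A - even_blocks g" for N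
  proof -
    obtain a where "Suc (2 * N) \<le> a" "a \<in> A" "a \<notin> even_blocks g" using far[of "Suc (2 * N)"] by auto
    then show ?thesis by (intro exI[of _ a]) auto
  qed
  ultimately show ?thesis unfolding splits_def infinite_nat_iff_unbounded_le by blast
qed

lemma finite_family_common_blocks:
  fixes R :: "nat set set"
  assumes "finite R" "\<forall>A\<in>R. infinite A"
  shows "\<exists>g. strict_mono g \<and> (\<forall>A\<in>R. \<forall>k. \<exists>a\<in>A. g k \<le> a \<and> a < g (Suc k))"
proof -
  have "\<exists>n'. n < n' \<and> (\<forall>A\<in>R. \<exists>a\<in>A. n \<le> a \<and> a < n')" for n
  proof -
    have "\<forall>A\<in>R. \<exists>a. a \<in> A \<and> n \<le> a"
      using assms(2) by (metis infinite_nat_iff_unbounded_le)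
    from bchoice[OF this] obtain f where f: "\<forall>A\<in>R. f A \<in> A \<and> n \<le> f A" by blast
    obtain n' where "insert n (f ` R) \<subseteq> {..<n'}"
      using finite_nat_bounded assms(1) by (meson finite_imageI finite_insert)
    then have "n < n'" "\<forall>A\<in>R. f A < n'" by auto
    with f show ?thesis by blast
  qed
  then obtain nxt where nxt: "\<forall>n. n < nxt n \<and> (\<forall>A\<in>R. \<exists>a\<in>A. n \<le> a \<and> a < nxt n)"
    using choice[of "\<lambda>n n'. n < n' \<and> (\<forall>A\<in>R. \<exists>a\<in>A. n \<le> a \<and> a < n')"] by blast
  define g where "g k = (nxt ^^ k) 0" for k
  have g_Suc: "g (Suc k) = nxt (g k)" for k by (simp add: g_def)
  then have "strict_mono g" using nxt by (simp add: strict_mono_Suc_iff)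
  moreover have "\<forall>A\<in>R. \<forall>k. \<exists>a\<in>A. g k \<le> a \<and> a < g (Suc k)"
    using nxt by (simp add: g_Suc)
  ultimately show ?thesis by blast
qed

lemma reaping_family_infinite: "reaping_family R \<Longrightarrow> infinite R"
proof
  assume R: "reaping_family R" and "finite R"
  moreover have "\<forall>A\<in>R. infinite A" using R reaping_family_member_infinite by blast
  ultimately obtain g where g: "strict_mono g"
    and blocks: "\<forall>A\<in>R. \<forall>k. \<exists>a\<in>A. g k \<le> a \<and> a < g (Suc k)"
    by (blast dest: finite_family_common_blocks)
  have "g k < g (Suc k)" for k
    using g by (simp add: strict_mono_Suc_iff)
  then have "splits (even_blocks g) UNIV"
    using splits_even_blocks[OF g, of UNIV] by blast
  then have "infinite (even_blocks g)" unfolding splits_def by simp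
  moreover have "\<forall>A\<in>R. splits (even_blocks g) A"
    using blocks splits_even_blocks[OF g] by blast
  ultimately show False using R unfolding reaping_family_def by blast
qed

definition extensions :: "bool list set \<Rightarrow> bool list \<Rightarrow> bool list set" where
  "extensions Y p = {\<sigma>\<in>Y. take (length p) \<sigma> = p}"

lemma extensions_subset_one_step:
  "extensions Y p \<subseteq> insert p (extensions Y (p @ [True]) \<union> extensions Y (p @ [False]))"
proof
  fix \<sigma> assume "\<sigma> \<in> extensions Y p"
  then have prefix: "take (length p) \<sigma> = p" and "\<sigma> \<in> Y" by (simp_all add: extensions_def)
  show "\<sigma> \<in> insert p (extensions Y (p @ [True]) \<union> extensions Y (p @ [False]))"
  proof (cases "length p < length \<sigma>")
    case True
    with prefix have "take (length (p @ [\<sigma> ! length p])) \<sigma> = p @ [\<sigma> ! length p]"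
      by (simp add: take_Suc_conv_app_nth)
    with \<open>\<sigma> \<in> Y\<close> have "\<sigma> \<in> extensions Y (p @ [\<sigma> ! length p])" by (simp add: extensions_def)
    then show ?thesis by (cases "\<sigma> ! length p") auto
  next
    case False
    with prefix show ?thesis by simp
  qed
qed

primrec koenig_branch :: "bool list set \<Rightarrow> nat \<Rightarrow> bool list" where
  "koenig_branch Y 0 = []"
| "koenig_branch Y (Suc n) =
     koenig_branch Y n @ [infinite (extensions Y (koenig_branch Y n @ [True]))]"

lemma length_koenig_branch [simp]: "length (koenig_branch Y n) = n"
  by (induction n) simp_all

lemma koenig_branch_eq_map: "koenig_branch Y n = map (\<lambda>i. koenig_branch Y (Suc i) ! i) [0..<n]"
  by (induction n) (simp_all add: nth_append)

lemma infinite_extensions_koenig_branch: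
  assumes "infinite Y"
  shows "infinite (extensions Y (koenig_branch Y n))"
proof (induction n)
  case 0
  with assms show ?case by (simp add: extensions_def)
next
  case (Suc n)
  let ?p = "koenig_branch Y n"
  have "infinite (extensions Y (?p @ [True]) \<union> extensions Y (?p @ [False]))"
    using Suc extensions_subset_one_step[of Y ?p] by (meson finite_insert finite_subset)
  then show ?case by (cases "infinite (extensions Y (?p @ [True]))") auto
qed

lemma koenig_infinite_binary_tree:
  assumes "infinite Y"
  shows "\<exists>x. \<forall>n. infinite (extensions Y (map x [0..<n]))"
  using infinite_extensions_koenig_branch[OF assms] koenig_branch_eq_map by metis

lemma exists_approximating_sequence:
  assumes "\<forall>n. extensions Y (map x [0..<n]) \<noteq> {}"
  obtains \<sigma> m where "\<And>k. \<sigma> k \<in> Y" "\<And>k. m k \<le> length (\<sigma> k)" "\<And>k. length (\<sigma> k) < m (Suc k)"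
    "\<And>k i. i < m k \<Longrightarrow> \<sigma> k ! i = x i"
proof -
  define pick where "pick n = (SOME \<sigma>. \<sigma> \<in> extensions Y (map x [0..<n]))" for n
  have pick: "pick n \<in> Y" "take n (pick n) = map x [0..<n]" for n
    using someI_ex[of "\<lambda>\<sigma>. \<sigma> \<in> extensions Y (map x [0..<n])"] assms
    by (auto simp: pick_def extensions_def)
  have "n \<le> length (pick n)" for n
    using arg_cong[OF pick(2)[of n], of length] by simp
  moreover have "pick n ! i = x i" if "i < n" for n i
    using arg_cong[OF pick(2)[of n], of "\<lambda>\<sigma>. \<sigma> ! i"] that by simp
  moreover define m where "m k = ((\<lambda>n. Suc (length (pick n))) ^^ k) 0" for k
  ultimately show thesis using pick(1) by (intro that[of "\<lambda>k. pick (m k)" m]) (simp_all add: m_def)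
qed

lemma infinite_S_set_inter_if_homogeneous:
  fixes G :: "nat set"
  assumes in_Y: "\<And>k. \<sigma> k \<in> Y"
    and m_le: "\<And>k. m k \<le> length (\<sigma> k)" and less_m: "\<And>k. length (\<sigma> k) < m (Suc k)"
    and agree: "\<And>k i. i < m k \<Longrightarrow> \<sigma> k ! i = x i"
    and hom: "\<And>i. i \<in> G \<Longrightarrow> x i = v \<and> (i \<in> even_blocks m \<longleftrightarrow> w)"
  shows "infinite (S_set G \<inter> Y)"
proof -
  have "mono m" unfolding mono_iff_le_Suc using m_le less_m by (meson le_trans less_imp_le)
  have S_set: "\<sigma> k \<in> S_set G" if "even k \<noteq> w" for k
  proof -
    have "\<sigma> k ! i = v" if "i \<in> G" "i < length (\<sigma> k)" for i
    proof (cases "i < m k")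
      case True
      with agree hom \<open>i \<in> G\<close> show ?thesis by simp
    next
      case False
      with less_m[of k] \<open>i < length (\<sigma> k)\<close> have "i \<in> even_blocks m \<longleftrightarrow> even k"
        by (intro mem_even_blocks_iff[OF \<open>mono m\<close>]) simp_all
      with hom[OF \<open>i \<in> G\<close>] \<open>even k \<noteq> w\<close> show ?thesis by simp
    qed
    then show ?thesis unfolding S_set_def by simp
  qed
  have "strict_mono (\<lambda>k. length (\<sigma> k))"
    unfolding strict_mono_Suc_iff using m_le less_m by (meson less_le_trans)
  then have "inj \<sigma>" by (metis (mono_tags) injI strict_mono_eq)
  moreover have "infinite {k :: nat. even k \<noteq> w}"
  proof -
    have "\<forall>N. \<exists>k\<ge>N. k \<in> {k :: nat. even k \<noteq> w}"
    proof
      fix N :: nat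
      show "\<exists>k\<ge>N. k \<in> {k. even k \<noteq> w}"
        by (rule exI[of _ "if w then Suc (2 * N) else 2 * N"]) auto
    qed
    then show ?thesis by (rule infinite_nat_iff_unbounded_le[THEN iffD2])
  qed
  ultimately have "infinite (\<sigma> ` {k. even k \<noteq> w})"
    by (meson finite_imageD inj_on_subset subset_UNIV)
  moreover have "\<sigma> ` {k. even k \<noteq> w} \<subseteq> S_set G \<inter> Y" using S_set in_Y by auto
  ultimately show ?thesis by (meson finite_subset)
qed

lemma reaping_family_covers:
  assumes R: "reaping_family R" and Y: "infinite Y"
  shows "\<exists>A\<in>R. \<exists>A'\<in>R. \<exists>n. infinite (enumerate A ` A' - {..<n})
           \<and> infinite (S_set (enumerate A ` A' - {..<n}) \<inter> Y)"
proof -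
  obtain x where "\<forall>n. infinite (extensions Y (map x [0..<n]))"
    using koenig_infinite_binary_tree[OF Y] by blast
  then have "\<forall>n. extensions Y (map x [0..<n]) \<noteq> {}" by (metis finite.emptyI)
  then obtain \<sigma> m where \<sigma>: "\<And>k. \<sigma> k \<in> Y" "\<And>k. m k \<le> length (\<sigma> k)"
    "\<And>k. length (\<sigma> k) < m (Suc k)" "\<And>k i. i < m k \<Longrightarrow> \<sigma> k ! i = x i"
    by (rule exists_approximating_sequence) blast
  obtain A v where A: "A \<in> R" "finite {i\<in>A. x i \<noteq> v}"
    using reaping_family_not_splits[OF R, of "Collect x"] by (auto simp: not_splits_iff)
  have "infinite A" using R A(1) by (rule reaping_family_member_infinite)
  define e where "e = enumerate A"
  obtain A' where A': "A' \<in> R" "\<not> splits (e -` even_blocks m) A'"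
    using reaping_family_not_splits[OF R] by blast
  have "\<not> splits (even_blocks m) (e ` A')" using A'(2) by (rule not_splits_image)
  then obtain w where w: "finite {i\<in>e ` A'. (i \<in> even_blocks m) \<noteq> w}"
    by (auto simp: not_splits_iff)
  have "finite ({i\<in>A. x i \<noteq> v} \<union> {i\<in>e ` A'. (i \<in> even_blocks m) \<noteq> w})"
    using A(2) w by blast
  then obtain n where n: "{i\<in>A. x i \<noteq> v} \<union> {i\<in>e ` A'. (i \<in> even_blocks m) \<noteq> w} \<subseteq> {..<n}"
    using finite_nat_bounded by blast
  define G where "G = e ` A' - {..<n}"
  have "infinite A'" using R A'(1) by (rule reaping_family_member_infinite)
  moreover have "inj e" using inj_enumerate[OF \<open>infinite A\<close>] by (simp add: e_def)
  ultimately have "infinite (e ` A')" by (metis finite_imageD inj_on_subset subset_UNIV)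
  then have "infinite G" by (simp add: G_def)
  have "e ` A' \<subseteq> A" using enumerate_in_set[OF \<open>infinite A\<close>] by (auto simp: e_def)
  have hom: "x i = v \<and> (i \<in> even_blocks m \<longleftrightarrow> w)" if "i \<in> G" for i
  proof -
    have "i \<in> e ` A'" "i \<in> A" "i \<notin> {..<n}" using that \<open>e ` A' \<subseteq> A\<close> by (auto simp: G_def)
    with n show ?thesis by blast
  qed
  have "infinite (S_set G \<inter> Y)" using \<sigma> hom by (rule infinite_S_set_inter_if_homogeneous)
  with A(1) A'(1) \<open>infinite G\<close> show ?thesis unfolding G_def e_def by blast
qed

lemma S_set_in_Spl: "infinite A \<Longrightarrow> S_set A \<in> Spl"
  unfolding Spl_def by (rule CollectI, rule exI[of _ "{A}"]) simp

definition reaping_cover :: "nat set set \<Rightarrow> bool list set set" where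
  "reaping_cover R = {S_set (enumerate A ` A' - {..<n}) | A A' n.
     A \<in> R \<and> A' \<in> R \<and> infinite (enumerate A ` A' - {..<n})}"

lemma cov_star_family_reaping_cover:
  assumes "reaping_family R"
  shows "cov_star_family Spl (reaping_cover R)"
  unfolding cov_star_family_def
proof (intro conjI allI impI)
  show "reaping_cover R \<subseteq> Spl" unfolding reaping_cover_def using S_set_in_Spl by blast
  fix Y :: "bool list set"
  assume "infinite Y"
  then obtain A A' n where "A \<in> R" "A' \<in> R" "infinite (enumerate A ` A' - {..<n})"
    and "infinite (S_set (enumerate A ` A' - {..<n}) \<inter> Y)"
    using reaping_family_covers[OF assms] by blast
  then show "\<exists>X\<in>reaping_cover R. infinite (X \<inter> Y)" unfolding reaping_cover_def by blast
qed

lemma card_of_reaping_cover: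
  assumes "infinite R"
  shows "|reaping_cover R| \<le>o |R|"
proof -
  let ?I = "R \<times> R \<times> (UNIV :: nat set)"
  have "reaping_cover R \<subseteq> (\<lambda>(A, A', n). S_set (enumerate A ` A' - {..<n})) ` ?I"
    unfolding reaping_cover_def by force
  then have "|reaping_cover R| \<le>o |?I|"
    using ordLeq_transitive[OF card_of_mono1 card_of_image] by blast
  moreover have "|?I| \<le>o |R|"
  proof -
    have R_R: "|R| \<le>o |R|" by (rule card_of_mono1) simp
    have "|UNIV :: nat set| \<le>o |R|" using assms infinite_iff_card_of_nat by blast
    moreover have "infinite (Field (card_of R))" "Card_order (card_of R)"
      using assms by (simp_all add: Field_card_of card_of_card_order_on)
    ultimately have "|R \<times> (UNIV :: nat set)| \<le>o |R|"
      using R_R card_of_Times_ordLeq_infinite_Field by blast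
    with R_R \<open>infinite (Field (card_of R))\<close> \<open>Card_order (card_of R)\<close> show ?thesis
      using card_of_Times_ordLeq_infinite_Field by blast
  qed
  ultimately show ?thesis by (rule ordLeq_transitive)
qed

definition char_prefixes :: "nat set \<Rightarrow> bool list set" where
  "char_prefixes B = range (\<lambda>n. map (\<lambda>i. i \<in> B) [0..<n])"

lemma infinite_char_prefixes: "infinite (char_prefixes B)"
proof -
  have "inj (\<lambda>n. map (\<lambda>i. i \<in> B) [0..<n])"
    by (rule injI) (metis diff_zero length_map length_upt)
  then show ?thesis unfolding char_prefixes_def by (rule range_inj_infinite)
qed

lemma finite_S_set_inter_char_prefixes:
  assumes "splits B A"
  shows "finite (S_set A \<inter> char_prefixes B)"
proof -
  obtain a b where "a \<in> A \<inter> B" "b \<in> A - B"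
    using assms unfolding splits_def by (metis finite.emptyI ex_in_conv)
  then have "S_set A \<inter> char_prefixes B \<subseteq> (\<lambda>n. map (\<lambda>i. i \<in> B) [0..<n]) ` {..max a b}"
    unfolding S_set_def char_prefixes_def by (force simp: not_le)
  then show ?thesis by (rule finite_subset) simp
qed

definition Spl_generators :: "bool list set \<Rightarrow> nat set set" where
  "Spl_generators X = (SOME \<A>. finite \<A> \<and> (\<forall>A\<in>\<A>. infinite A) \<and> X \<subseteq> (\<Union>A\<in>\<A>. S_set A))"

lemma Spl_generators:
  assumes "X \<in> Spl"
  shows "finite (Spl_generators X)" "\<forall>A\<in>Spl_generators X. infinite A"
    "X \<subseteq> (\<Union>A\<in>Spl_generators X. S_set A)"
proof -
  have "\<exists>\<A>. finite \<A> \<and> (\<forall>A\<in>\<A>. infinite A) \<and> X \<subseteq> (\<Union>A\<in>\<A>. S_set A)"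
    using assms unfolding Spl_def by blast
  from someI_ex[OF this] show "finite (Spl_generators X)" "\<forall>A\<in>Spl_generators X. infinite A"
    "X \<subseteq> (\<Union>A\<in>Spl_generators X. S_set A)"
    unfolding Spl_generators_def by blast+
qed

lemma reaping_family_Spl_generators:
  assumes F: "cov_star_family Spl F"
  shows "reaping_family (\<Union>X\<in>F. Spl_generators X)"
  unfolding reaping_family_def
proof (intro conjI notI)
  have "F \<subseteq> Spl" using F unfolding cov_star_family_def by blast
  then show "\<forall>A\<in>\<Union>X\<in>F. Spl_generators X. infinite A" using Spl_generators(2) by blast
  assume "\<exists>B. infinite B \<and> (\<forall>A\<in>\<Union>X\<in>F. Spl_generators X. splits B A)"
  then obtain B where B: "\<And>X A. X \<in> F \<Longrightarrow> A \<in> Spl_generators X \<Longrightarrow> splits B A" by blast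
  obtain X where "X \<in> F" and X_inf: "infinite (X \<inter> char_prefixes B)"
    using F infinite_char_prefixes unfolding cov_star_family_def by blast
  have "X \<inter> char_prefixes B \<subseteq> (\<Union>A\<in>Spl_generators X. S_set A \<inter> char_prefixes B)"
    using Spl_generators(3) \<open>X \<in> F\<close> \<open>F \<subseteq> Spl\<close> by blast
  moreover have "finite (\<Union>A\<in>Spl_generators X. S_set A \<inter> char_prefixes B)"
    using Spl_generators(1) \<open>X \<in> F\<close> \<open>F \<subseteq> Spl\<close> B finite_S_set_inter_char_prefixes by blast
  ultimately show False using X_inf finite_subset by blast
qed

lemma card_of_finite_le_infinite: "finite A \<Longrightarrow> infinite B \<Longrightarrow> |A| \<le>o |B|"
  using finite_ordLess_infinite[OF card_of_Well_order card_of_Well_order] ordLess_imp_ordLeq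
  by (metis Field_card_of)

lemma card_of_Spl_generators:
  assumes F: "cov_star_family Spl F"
  shows "|\<Union>X\<in>F. Spl_generators X| \<le>o |F|"
proof -
  have fin: "finite (Spl_generators X)" if "X \<in> F" for X
    using F that Spl_generators(1) unfolding cov_star_family_def by blast
  have "infinite F"
  proof
    assume "finite F"
    with fin have "finite (\<Union>X\<in>F. Spl_generators X)" by blast
    with reaping_family_infinite reaping_family_Spl_generators[OF F] show False by blast
  qed
  have "|F| \<le>o |F|" by (rule card_of_mono1) simp
  with fin \<open>infinite F\<close> show ?thesis
    by (intro card_of_UNION_ordLeq_infinite) (auto intro: card_of_finite_le_infinite)
qed

theorem mainTheorem5:
  shows "\<exists>F R. cov_star_family Spl F \<and> (\<forall>F'. cov_star_family Spl F' \<longrightarrow> (card_of F, card_of F') \<in> ordLeq)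
              \<and> reaping_family R \<and> (\<forall>R'. reaping_family R' \<longrightarrow> (card_of R, card_of R') \<in> ordLeq)
              \<and> (card_of F, card_of R) \<in> ordIso"
proof -
  obtain R where R: "reaping_family R" and R_min: "\<forall>R'. reaping_family R' \<longrightarrow> |R| \<le>o |R'|"
    using exists_card_minimal[of reaping_family, OF reaping_family_infinite_sets] by blast
  obtain F where F: "cov_star_family Spl F" and F_min: "\<forall>F'. cov_star_family Spl F' \<longrightarrow> |F| \<le>o |F'|"
    using exists_card_minimal[of "cov_star_family Spl", OF cov_star_family_reaping_cover[OF R]] by blast
  have "|F| \<le>o |R|"
    using F_min cov_star_family_reaping_cover[OF R] card_of_reaping_cover[OF reaping_family_infinite[OF R]]
      ordLeq_transitive by blast
  moreover have "|R| \<le>o |F|"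
    using R_min reaping_family_Spl_generators[OF F] card_of_Spl_generators[OF F] ordLeq_transitive by blast
  ultimately have "|F| =o |R|" by (simp add: ordIso_iff_ordLeq)
  with F F_min R R_min show ?thesis by blast
qed

end
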